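(* Consider the sparse signal in noise model: $S\in\{1,\dots,N\}$, $\mathcal{X}_S=\{\mathbf{x}\in\mathbb{R}^N:\|\mathbf{x}\|_0\le S\}$, $\sigma>0$, $\mathbf{y}=\mathbf{x}+\mathbf{n}$, $\mathbf{n}\sim\mathcal{N}(\mathbf{0},\sigma^2\mathbf{I})$, parameter function $g(\mathbf{x})=x_k$ for fixed $k\in[N]$. Let $\mathbf{x}_0\in\mathcal{X}_S$ and $\mathcal{K}=\{k_1,\dots,k_{|\mathcal{K}|}\}\subseteq[N]$ with $|\mathcal{K}|\le S$. Let $c:\mathcal{X}_S\to\mathbb{R}$ be a bias function whose partial derivatives $\frac{\partial c(\mathbf{x})}{\partial x_{k_i}}\big|_{\mathbf{x}=\mathbf{x}_0^{\mathcal{K}}}$ exist for all $k_i\in\mathcal{K}$, let $\gamma(\mathbf{x})=c(\mathbf{x})+x_k$ and $(\mathbf{b}_{\mathbf{x}_0})_i=\delta_{k,k_i}+\frac{\partial c(\mathbf{x})}{\partial x_{k_i}}\big|_{\mathbf{x}=\mathbf{x}_0^{\mathcal{K}}}$, $i\in[|\mathcal{K}|]$. Then $$M(c,\mathbf{x}_0)\ \ge\ \exp\Big(-\tfrac{1}{\sigma^2}\big\|\mathbf{x}_0^{[N]\setminus\mathcal{K}}\big\|_2^2\Big)\big[\sigma^2\|\mathbf{b}_{\mathbf{x}_0}\|_2^2+\gamma^2(\mathbf{x}_0^{\mathcal{K}})\big]-\gamma^2(\mathbf{x}_0).$$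
   Context: For $\mathcal{I}\subseteq[N]$, $\mathbf{x}^{\mathcal{I}}$ is $\mathbf{x}$ with all entries outside $\mathcal{I}$ set to zero; $\delta_{k,l}$ = Kronecker delta. $M(c,\mathbf{x}_0)$ is the infimum of $v(\hat g;\mathbf{x}_0)=\mathsf{E}_{\mathbf{x}_0}\{(\hat g(\mathbf{y})-\mathsf{E}_{\mathbf{x}_0}\hat g(\mathbf{y}))^2\}$ over estimators $\hat g:\mathbb{R}^N\to\mathbb{R}$ with finite variance at $\mathbf{x}_0$ and $\mathsf{E}_{\mathbf{x}}\{\hat g(\mathbf{y})\}-x_k=c(\mathbf{x})$ for all $\mathbf{x}\in\mathcal{X}_S$ ($+\infty$ if none exists). *)

theory Defs
  imports "HOL-Probability.Probability"
begin

text \<open>Vectors in R^N are modelled as real^'n for a finite index type 'n (N = CARD('n)).\<close>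

definition l0norm :: "real^'n \<Rightarrow> nat" where
  "l0norm x = card {i. x $ i \<noteq> 0}"

definition sparse_set :: "nat \<Rightarrow> (real^'n) set" where
  "sparse_set S = {x. l0norm x \<le> S}"

definition restr :: "real^'n \<Rightarrow> 'n set \<Rightarrow> real^'n" where
  "restr x I = (\<chi> i. if i \<in> I then x $ i else 0)"

text \<open>Distribution of y = x + n, n ~ N(0, sigma^2 I).\<close>
definition gauss_meas :: "real \<Rightarrow> real^'n \<Rightarrow> (real^'n) measure" where
  "gauss_meas \<sigma> x = density lborel
     (\<lambda>y. ennreal ((2 * pi * \<sigma>\<^sup>2) powr (- real CARD('n) / 2)
                    * exp (- (norm (y - x))\<^sup>2 / (2 * \<sigma>\<^sup>2))))"

definition admissible :: "nat \<Rightarrow> real \<Rightarrow> 'n \<Rightarrow> (real^'n \<Rightarrow> real) \<Rightarrow> real^'n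
    \<Rightarrow> (real^'n \<Rightarrow> real) \<Rightarrow> bool" where
  "admissible S \<sigma> k c x0 g \<longleftrightarrow>
     g \<in> borel_measurable lborel \<and>
     integrable (gauss_meas \<sigma> x0) (\<lambda>y. (g y)\<^sup>2) \<and>
     (\<forall>x \<in> sparse_set S. integrable (gauss_meas \<sigma> x) g \<and>
        (\<integral>y. g y \<partial>gauss_meas \<sigma> x) - x $ k = c x)"

definition est_variance :: "real \<Rightarrow> (real^'n \<Rightarrow> real) \<Rightarrow> real^'n \<Rightarrow> real" where
  "est_variance \<sigma> g x0 =
     (\<integral>y. (g y - (\<integral>z. g z \<partial>gauss_meas \<sigma> x0))\<^sup>2 \<partial>gauss_meas \<sigma> x0)"

text \<open>Minimum achievable variance M(c,x0); Inf of the empty set is +infinity.\<close>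
definition min_var :: "nat \<Rightarrow> real \<Rightarrow> 'n \<Rightarrow> (real^'n \<Rightarrow> real) \<Rightarrow> real^'n \<Rightarrow> ereal" where
  "min_var S \<sigma> k c x0 =
     (INF g \<in> {g. admissible S \<sigma> k c x0 g}. ereal (est_variance \<sigma> g x0))"

end

theory Submission
  imports Defs "HOL-Real_Asymp.Real_Asymp"
begin

text \<open>
  Write p_x for the density of y at the parameter x. For an estimator g with mean function
  gamma on the sparse set, Cauchy--Schwarz in L2(p_x0) between g and a combination
  sum_j a_j p_zj / p_x0 of likelihood ratios at sparse test points z_j gives a Barankin-type
  lower bound on E_x0 g^2; for Gaussians the Gram matrix of these likelihood ratios is
  exp(<z_j - x0, z_l - x0> / sigma^2). Taking as test points x0^K and x0^K + t e_i (i in K),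
  which are S-sparse, with weights forming difference quotients of gamma, and letting t -> 0,
  the bound turns into the stated one with the partial derivatives of gamma at x0^K.
  Finally the variance is E_x0 g^2 - gamma(x0)^2.
\<close>

definition gauss_density :: "real \<Rightarrow> real^'n \<Rightarrow> real^'n \<Rightarrow> real" where
  "gauss_density \<sigma> m y =
     (2 * pi * \<sigma>\<^sup>2) powr (- real CARD('n) / 2) * exp (- (norm (y - m))\<^sup>2 / (2 * \<sigma>\<^sup>2))"

lemma gauss_meas_eq_density:
  "gauss_meas \<sigma> m = density lborel (\<lambda>y. ennreal (gauss_density \<sigma> m y))"
  unfolding gauss_meas_def gauss_density_def ..

lemma gauss_density_pos: "\<sigma> > 0 \<Longrightarrow> gauss_density \<sigma> m y > 0"
  unfolding gauss_density_def by simp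

lemma gauss_density_nonneg: "gauss_density \<sigma> m y \<ge> 0"
  unfolding gauss_density_def by simp

lemma borel_measurable_gauss_density[measurable]: "gauss_density \<sigma> m \<in> borel_measurable borel"
  unfolding gauss_density_def by measurable

lemma gauss_density_eq_prod_normal_density:
  fixes m y :: "real^'n"
  assumes "\<sigma> > 0"
  shows "gauss_density \<sigma> m y = (\<Prod>b\<in>Basis. normal_density (m \<bullet> b) \<sigma> (y \<bullet> b))"
proof -
  have pos: "2 * pi * \<sigma>\<^sup>2 > 0" using assms by simp
  have "(2 * pi * \<sigma>\<^sup>2) powr (- real CARD('n) / 2) = ((2 * pi * \<sigma>\<^sup>2) powr (- 1 / 2)) powr CARD('n)"
    by (simp add: powr_powr)
  also have "\<dots> = ((2 * pi * \<sigma>\<^sup>2) powr (- 1 / 2)) ^ CARD('n)"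
    using pos by (subst powr_realpow) auto
  also have "(2 * pi * \<sigma>\<^sup>2) powr (- 1 / 2) = 1 / sqrt (2 * pi * \<sigma>\<^sup>2)"
    using pos by (simp add: powr_minus_divide powr_half_sqrt)
  finally have normalization:
    "(2 * pi * \<sigma>\<^sup>2) powr (- real CARD('n) / 2) = (1 / sqrt (2 * pi * \<sigma>\<^sup>2)) ^ CARD('n)" .
  have "(norm (y - m))\<^sup>2 = (\<Sum>b\<in>Basis. ((y - m) \<bullet> b) * ((y - m) \<bullet> b))"
    unfolding power2_norm_eq_inner by (rule euclidean_inner)
  also have "\<dots> = (\<Sum>b\<in>Basis. (y \<bullet> b - m \<bullet> b)\<^sup>2)"
    by (simp add: inner_diff_left power2_eq_square)
  finally have "- (norm (y - m))\<^sup>2 / (2 * \<sigma>\<^sup>2) = (\<Sum>b\<in>Basis. - (y \<bullet> b - m \<bullet> b)\<^sup>2 / (2 * \<sigma>\<^sup>2))"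
    by (simp add: sum_divide_distrib sum_negf)
  then have "exp (- (norm (y - m))\<^sup>2 / (2 * \<sigma>\<^sup>2)) = (\<Prod>b\<in>Basis. exp (- (y \<bullet> b - m \<bullet> b)\<^sup>2 / (2 * \<sigma>\<^sup>2)))"
    by (simp add: exp_sum)
  then show ?thesis
    unfolding gauss_density_def normal_density_def normalization
    by (simp add: prod_dividef power2_commute power_one_over)
qed

lemma nn_integral_gauss_density:
  fixes m :: "real^'n"
  assumes "\<sigma> > 0"
  shows "(\<integral>\<^sup>+y. ennreal (gauss_density \<sigma> m y) \<partial>lborel) = 1"
proof -
  have "(\<integral>\<^sup>+y. ennreal (gauss_density \<sigma> m y) \<partial>lborel)
      = (\<integral>\<^sup>+y. (\<Prod>b\<in>Basis. ennreal (normal_density (m \<bullet> b) \<sigma> (y \<bullet> b))) \<partial>lborel)"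
    using assms by (simp add: gauss_density_eq_prod_normal_density prod_ennreal)
  also have "\<dots> = (\<Prod>b\<in>(Basis::(real^'n) set). \<integral>\<^sup>+x. ennreal (normal_density (m \<bullet> b) \<sigma> x) \<partial>lborel)"
    by (rule nn_integral_lborel_prod) auto
  also have "\<dots> = 1"
    using nn_integral_eq_integral[OF integrable_normal_density] assms by simp
  finally show ?thesis .
qed

lemma integrable_gauss_density: "\<sigma> > 0 \<Longrightarrow> integrable lborel (gauss_density \<sigma> m)"
  by (rule integrableI_nonneg) (auto simp: nn_integral_gauss_density gauss_density_nonneg)

lemma integral_gauss_density: "\<sigma> > 0 \<Longrightarrow> (\<integral>y. gauss_density \<sigma> m y \<partial>lborel) = 1"
  by (subst integral_eq_nn_integral) (auto simp: nn_integral_gauss_density gauss_density_nonneg)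

lemma prob_space_gauss_meas: "\<sigma> > 0 \<Longrightarrow> prob_space (gauss_meas \<sigma> m)"
  by (rule prob_spaceI)
     (simp add: gauss_meas_eq_density emeasure_density nn_integral_gauss_density)

lemma integrable_gauss_meas_iff:
  "f \<in> borel_measurable lborel \<Longrightarrow>
    integrable (gauss_meas \<sigma> m) f \<longleftrightarrow> integrable lborel (\<lambda>y. gauss_density \<sigma> m y * f y)"
  unfolding gauss_meas_eq_density by (subst integrable_density) (auto simp: gauss_density_nonneg)

lemma integral_gauss_meas:
  "f \<in> borel_measurable lborel \<Longrightarrow>
    (\<integral>y. f y \<partial>gauss_meas \<sigma> m) = (\<integral>y. gauss_density \<sigma> m y * f y \<partial>lborel)"
  unfolding gauss_meas_eq_density by (subst integral_density) (auto simp: gauss_density_nonneg)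

lemma est_variance_eq_second_moment:
  assumes "\<sigma> > 0"
    and "integrable (gauss_meas \<sigma> x0) g" and "integrable (gauss_meas \<sigma> x0) (\<lambda>y. (g y)\<^sup>2)"
  shows "est_variance \<sigma> g x0
    = (\<integral>y. (g y)\<^sup>2 \<partial>gauss_meas \<sigma> x0) - (\<integral>y. g y \<partial>gauss_meas \<sigma> x0)\<^sup>2"
proof -
  interpret prob_space "gauss_meas \<sigma> x0"
    using assms(1) by (rule prob_space_gauss_meas)
  show ?thesis
    unfolding est_variance_def using assms(2,3) by (rule variance_eq)
qed

text \<open>The product of two likelihood ratios p_z p_w / p_x^2 has p_x-mean exp(<z - x, w - x> / sigma^2).\<close>

lemma gauss_density_mult_divide:
  fixes x z w y :: "real^'n"
  assumes "\<sigma> > 0"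
  shows "gauss_density \<sigma> z y * gauss_density \<sigma> w y / gauss_density \<sigma> x y
    = exp (((z - x) \<bullet> (w - x)) / \<sigma>\<^sup>2) * gauss_density \<sigma> (z + w - x) y"
proof -
  define C where "C = (2 * pi * \<sigma>\<^sup>2) powr (- real CARD('n) / 2)"
  have "C > 0" unfolding C_def using assms by simp
  have "- (norm (y - z))\<^sup>2 - (norm (y - w))\<^sup>2 + (norm (y - x))\<^sup>2
      = 2 * ((z - x) \<bullet> (w - x)) - (norm (y - (z + w - x)))\<^sup>2"
    by (simp add: power2_norm_eq_inner inner_diff_left inner_diff_right inner_add_left
        inner_add_right inner_commute algebra_simps)
  then have exponent: "- (norm (y - z))\<^sup>2 / (2 * \<sigma>\<^sup>2) + - (norm (y - w))\<^sup>2 / (2 * \<sigma>\<^sup>2)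
        - - (norm (y - x))\<^sup>2 / (2 * \<sigma>\<^sup>2)
      = ((z - x) \<bullet> (w - x)) / \<sigma>\<^sup>2 + - (norm (y - (z + w - x)))\<^sup>2 / (2 * \<sigma>\<^sup>2)"
    using assms by (simp add: field_simps)
  have "gauss_density \<sigma> z y * gauss_density \<sigma> w y / gauss_density \<sigma> x y
      = C * exp (- (norm (y - z))\<^sup>2 / (2 * \<sigma>\<^sup>2) + - (norm (y - w))\<^sup>2 / (2 * \<sigma>\<^sup>2)
                 - - (norm (y - x))\<^sup>2 / (2 * \<sigma>\<^sup>2))"
    unfolding gauss_density_def C_def[symmetric] exp_diff exp_add using \<open>C > 0\<close> by simp
  then show ?thesis
    unfolding exponent gauss_density_def C_def[symmetric] by (simp add: exp_add[symmetric])
qed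

lemma barankin_inequality:
  fixes x0 :: "real^'n" and z :: "'j \<Rightarrow> real^'n" and a :: "'j \<Rightarrow> real"
  assumes "\<sigma> > 0" and "finite J"
    and [measurable]: "g \<in> borel_measurable lborel"
    and "integrable (gauss_meas \<sigma> x0) (\<lambda>y. (g y)\<^sup>2)"
    and "\<And>j. j \<in> J \<Longrightarrow> integrable (gauss_meas \<sigma> (z j)) g"
  shows "2 * s * (\<Sum>j\<in>J. a j * (\<integral>y. g y \<partial>gauss_meas \<sigma> (z j)))
      - s\<^sup>2 * (\<Sum>j\<in>J. \<Sum>l\<in>J. a j * a l * exp (((z j - x0) \<bullet> (z l - x0)) / \<sigma>\<^sup>2))
    \<le> (\<integral>y. (g y)\<^sup>2 \<partial>gauss_meas \<sigma> x0)"
proof -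
  let ?p = "gauss_density \<sigma>"
  let ?G = "\<lambda>j l. exp (((z j - x0) \<bullet> (z l - x0)) / \<sigma>\<^sup>2)"
  have p_pos: "?p x0 y > 0" for y using assms(1) by (rule gauss_density_pos)
  have int_sq: "integrable lborel (\<lambda>y. ?p x0 y * (g y)\<^sup>2)"
    using assms(4) by (simp add: integrable_gauss_meas_iff)
  have int_g: "integrable lborel (\<lambda>y. ?p (z j) y * g y)" if "j \<in> J" for j
    using assms(5)[OF that] by (simp add: integrable_gauss_meas_iff)
  have int_gram: "integrable lborel (\<lambda>y. ?G j l * ?p (z j + z l - x0) y)" for j l
    using integrable_gauss_density[OF assms(1)] by simp
  define W where "W y = (\<Sum>j\<in>J. a j * (?p (z j) y / ?p x0 y))" for y
  have expand: "?p x0 y * (g y - s * W y)\<^sup>2 = ?p x0 y * (g y)\<^sup>2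
      - 2 * s * (\<Sum>j\<in>J. a j * (?p (z j) y * g y))
      + s\<^sup>2 * (\<Sum>j\<in>J. \<Sum>l\<in>J. a j * a l * (?G j l * ?p (z j + z l - x0) y))" for y
  proof -
    have "?p x0 y * (W y)\<^sup>2 = (\<Sum>j\<in>J. \<Sum>l\<in>J. a j * a l * (?p (z j) y * ?p (z l) y / ?p x0 y))"
      unfolding W_def power2_eq_square sum_product using p_pos[of y]
      by (simp add: sum_distrib_left field_simps)
    also have "\<dots> = (\<Sum>j\<in>J. \<Sum>l\<in>J. a j * a l * (?G j l * ?p (z j + z l - x0) y))"
      by (simp only: gauss_density_mult_divide[OF assms(1)])
    finally have quadratic: "?p x0 y * (W y)\<^sup>2 = \<dots>" .
    have linear: "?p x0 y * (g y * W y) = (\<Sum>j\<in>J. a j * (?p (z j) y * g y))"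
      unfolding W_def using p_pos[of y] by (simp add: sum_distrib_left field_simps)
    have "?p x0 y * (g y - s * W y)\<^sup>2
        = ?p x0 y * (g y)\<^sup>2 - 2 * s * (?p x0 y * (g y * W y)) + s\<^sup>2 * (?p x0 y * (W y)\<^sup>2)"
      by (simp add: power2_eq_square algebra_simps)
    then show ?thesis
      unfolding linear quadratic .
  qed
  have int_linear: "integrable lborel (\<lambda>y. \<Sum>j\<in>J. a j * (?p (z j) y * g y))"
    using int_g by auto
  have int_quadratic: "integrable lborel
      (\<lambda>y. \<Sum>j\<in>J. \<Sum>l\<in>J. a j * a l * (?G j l * ?p (z j + z l - x0) y))"
    using int_gram by auto
  have "0 \<le> (\<integral>y. ?p x0 y * (g y - s * W y)\<^sup>2 \<partial>lborel)"
    using p_pos by (intro Bochner_Integration.integral_nonneg) (simp add: less_imp_le)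
  also have "\<dots> = (\<integral>y. ?p x0 y * (g y)\<^sup>2 \<partial>lborel)
      - 2 * s * (\<integral>y. (\<Sum>j\<in>J. a j * (?p (z j) y * g y)) \<partial>lborel)
      + s\<^sup>2 * (\<integral>y. (\<Sum>j\<in>J. \<Sum>l\<in>J. a j * a l * (?G j l * ?p (z j + z l - x0) y)) \<partial>lborel)"
    unfolding expand using int_sq int_linear int_quadratic by simp
  also have "(\<integral>y. (\<Sum>j\<in>J. a j * (?p (z j) y * g y)) \<partial>lborel)
      = (\<Sum>j\<in>J. a j * (\<integral>y. g y \<partial>gauss_meas \<sigma> (z j)))"
    using int_g by (simp add: integral_gauss_meas)
  also have "(\<integral>y. (\<Sum>j\<in>J. \<Sum>l\<in>J. a j * a l * (?G j l * ?p (z j + z l - x0) y)) \<partial>lborel)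
      = (\<Sum>j\<in>J. \<Sum>l\<in>J. a j * a l * ?G j l)"
    using int_gram by (simp add: integral_gauss_density[OF assms(1)])
  finally show ?thesis
    by (simp add: integral_gauss_meas)
qed

lemma double_sum_rank_one_plus_diagonal:
  fixes a :: "'j \<Rightarrow> real"
  assumes "finite J" and "A \<subseteq> J"
  shows "(\<Sum>j\<in>J. \<Sum>l\<in>J. a j * a l * (1 + (if j = l \<and> j \<in> A then q else 0)))
    = (\<Sum>j\<in>J. a j)\<^sup>2 + q * (\<Sum>j\<in>A. (a j)\<^sup>2)"
proof -
  have diagonal: "(\<Sum>l\<in>J. if j = l \<and> j \<in> A then a j * a l * q else 0)
      = (if j \<in> A then q * (a j)\<^sup>2 else 0)" if "j \<in> J" for j
    using that assms(1) by (cases "j \<in> A") (simp_all add: power2_eq_square)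
  have "(\<Sum>j\<in>J. \<Sum>l\<in>J. a j * a l * (1 + (if j = l \<and> j \<in> A then q else 0)))
      = (\<Sum>j\<in>J. \<Sum>l\<in>J. a j * a l) + (\<Sum>j\<in>J. \<Sum>l\<in>J. if j = l \<and> j \<in> A then a j * a l * q else 0)"
    by (simp only: sum.distrib[symmetric]) (intro sum.cong refl, auto simp: distrib_left)
  also have "(\<Sum>j\<in>J. \<Sum>l\<in>J. if j = l \<and> j \<in> A then a j * a l * q else 0)
      = (\<Sum>j\<in>J. if j \<in> A then q * (a j)\<^sup>2 else 0)"
    by (rule sum.cong[OF refl diagonal])
  also have "(\<Sum>j\<in>J. \<Sum>l\<in>J. a j * a l) = (\<Sum>j\<in>J. a j)\<^sup>2"
    by (simp only: power2_eq_square sum_product)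
  also have "(\<Sum>j\<in>J. if j \<in> A then q * (a j)\<^sup>2 else 0) = q * (\<Sum>j\<in>A. (a j)\<^sup>2)"
    using assms by (simp add: sum.If_cases Int_absorb1 sum_distrib_left)
  finally show ?thesis .
qed

lemma sparse_setI: "{i. x $ i \<noteq> 0} \<subseteq> K \<Longrightarrow> card K \<le> S \<Longrightarrow> x \<in> sparse_set S"
  unfolding sparse_set_def l0norm_def by (auto dest: card_mono[OF finite])

lemma second_moment_ge_axis_quotients:
  fixes x0 :: "real^'n" and \<gamma> :: "real^'n \<Rightarrow> real" and \<beta> :: "'n \<Rightarrow> real"
  assumes "\<sigma> > 0" and "t \<noteq> 0" and "card K \<le> S"
    and [measurable]: "g \<in> borel_measurable lborel"
    and "integrable (gauss_meas \<sigma> x0) (\<lambda>y. (g y)\<^sup>2)"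
    and mean: "\<And>x. x \<in> sparse_set S \<Longrightarrow>
      integrable (gauss_meas \<sigma> x) g \<and> (\<integral>y. g y \<partial>gauss_meas \<sigma> x) = \<gamma> x"
  shows "exp (- (norm (restr x0 (UNIV - K)))\<^sup>2 / \<sigma>\<^sup>2) *
      (2 * ((\<gamma> (restr x0 K))\<^sup>2
            + (\<Sum>i\<in>K. \<beta> i * ((\<gamma> (restr x0 K + t *\<^sub>R axis i 1) - \<gamma> (restr x0 K)) / t)))
       - ((\<gamma> (restr x0 K))\<^sup>2 + (\<Sum>i\<in>K. (\<beta> i)\<^sup>2 * ((exp (t\<^sup>2 / \<sigma>\<^sup>2) - 1) / t\<^sup>2))))
    \<le> (\<integral>y. (g y)\<^sup>2 \<partial>gauss_meas \<sigma> x0)"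
proof -
  define x0K where "x0K = restr x0 K"
  define r where "r = restr x0 (UNIV - K)"
  define E where "E = exp ((norm r)\<^sup>2 / \<sigma>\<^sup>2)"
  define q where "q = exp (t\<^sup>2 / \<sigma>\<^sup>2) - 1"
  text \<open>Index None stands for the test point x0^K and Some i for x0^K + t e_i; the weights a
    turn the linear term of the Barankin inequality into difference quotients of gamma.\<close>
  define J where "J = insert None (Some ` K)"
  define e where "e j = (case j of None \<Rightarrow> 0 | Some (i::'n) \<Rightarrow> t *\<^sub>R axis i (1::real))" for j
  define a where "a j = (case j of None \<Rightarrow> \<gamma> x0K - (\<Sum>i\<in>K. \<beta> i / t) | Some i \<Rightarrow> \<beta> i / t)" for j
  have "finite J" and "Some ` K \<subseteq> J" unfolding J_def by auto
  have test_point_sparse: "x0K + e j \<in> sparse_set S" if "j \<in> J" for j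
    using that \<open>card K \<le> S\<close>
    by (intro sparse_setI) (auto simp: J_def e_def x0K_def restr_def axis_def split: if_splits)
  have gram: "exp (((x0K + e j - x0) \<bullet> (x0K + e l - x0)) / \<sigma>\<^sup>2)
      = E * (1 + (if j = l \<and> j \<in> Some ` K then q else 0))" if "j \<in> J" "l \<in> J" for j l
  proof -
    have shift: "x0K + e j - x0 = e j - r" for j
      unfolding x0K_def r_def by (simp add: vec_eq_iff restr_def)
    have "e j \<bullet> r = 0" if "j \<in> J" for j
      using that by (auto simp: J_def e_def r_def restr_def inner_axis')
    moreover have "e j \<bullet> e l = (if j = l \<and> j \<in> Some ` K then t\<^sup>2 else 0)"
      using that by (auto simp: J_def e_def inner_axis_axis power2_eq_square split: if_splits)
    ultimately have "(x0K + e j - x0) \<bullet> (x0K + e l - x0)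
        = (norm r)\<^sup>2 + (if j = l \<and> j \<in> Some ` K then t\<^sup>2 else 0)"
      using that unfolding shift
      by (simp add: inner_diff_left inner_diff_right inner_commute power2_norm_eq_inner)
    then show ?thesis
      unfolding E_def q_def
      by (cases "j = l \<and> j \<in> Some ` K") (auto simp: add_divide_distrib exp_add)
  qed
  have linear: "(\<Sum>j\<in>J. a j * (\<integral>y. g y \<partial>gauss_meas \<sigma> (x0K + e j)))
      = (\<gamma> x0K)\<^sup>2 + (\<Sum>i\<in>K. \<beta> i * ((\<gamma> (x0K + t *\<^sub>R axis i 1) - \<gamma> x0K) / t))"
  proof -
    have "(\<Sum>j\<in>J. a j * (\<integral>y. g y \<partial>gauss_meas \<sigma> (x0K + e j))) = (\<Sum>j\<in>J. a j * \<gamma> (x0K + e j))"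
      using mean[OF test_point_sparse] by simp
    also have "\<dots> = a None * \<gamma> x0K + (\<Sum>i\<in>K. \<beta> i / t * \<gamma> (x0K + t *\<^sub>R axis i 1))"
      by (simp add: J_def sum.reindex a_def e_def)
    finally show ?thesis
      by (simp add: a_def power2_eq_square algebra_simps diff_divide_distrib sum_subtractf
          sum_distrib_left sum_distrib_right)
  qed
  have quadratic: "(\<Sum>j\<in>J. \<Sum>l\<in>J. a j * a l * exp (((x0K + e j - x0) \<bullet> (x0K + e l - x0)) / \<sigma>\<^sup>2))
      = E * ((\<gamma> x0K)\<^sup>2 + (\<Sum>i\<in>K. (\<beta> i)\<^sup>2 * (q / t\<^sup>2)))"
  proof -
    have "(\<Sum>j\<in>J. \<Sum>l\<in>J. a j * a l * exp (((x0K + e j - x0) \<bullet> (x0K + e l - x0)) / \<sigma>\<^sup>2))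
        = E * (\<Sum>j\<in>J. \<Sum>l\<in>J. a j * a l * (1 + (if j = l \<and> j \<in> Some ` K then q else 0)))"
      by (simp add: gram sum_distrib_left mult.left_commute)
    also have "\<dots> = E * ((\<Sum>j\<in>J. a j)\<^sup>2 + q * (\<Sum>j\<in>Some ` K. (a j)\<^sup>2))"
      using \<open>finite J\<close> \<open>Some ` K \<subseteq> J\<close> by (simp add: double_sum_rank_one_plus_diagonal)
    also have "(\<Sum>j\<in>J. a j) = \<gamma> x0K"
      by (simp add: J_def sum.reindex a_def)
    also have "(\<Sum>j\<in>Some ` K. (a j)\<^sup>2) = (\<Sum>i\<in>K. (\<beta> i / t)\<^sup>2)"
      by (simp add: sum.reindex a_def)
    finally show ?thesis
      by (simp add: power_divide sum_distrib_left sum_divide_distrib field_simps)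
  qed
  have "E > 0" unfolding E_def by simp
  have "2 * (1 / E) * (\<Sum>j\<in>J. a j * (\<integral>y. g y \<partial>gauss_meas \<sigma> (x0K + e j)))
      - (1 / E)\<^sup>2 * (\<Sum>j\<in>J. \<Sum>l\<in>J. a j * a l * exp (((x0K + e j - x0) \<bullet> (x0K + e l - x0)) / \<sigma>\<^sup>2))
    \<le> (\<integral>y. (g y)\<^sup>2 \<partial>gauss_meas \<sigma> x0)" (is "?barankin")
    using mean[OF test_point_sparse]
    by (intro barankin_inequality[OF assms(1) \<open>finite J\<close> assms(4,5)]) auto
  have scale: "1 / E * (2 * N - D) = 2 * (1 / E) * N - (1 / E)\<^sup>2 * (E * D)" for N D
    using \<open>E > 0\<close> by (simp add: power2_eq_square field_simps)
  have weight: "exp (- (norm r)\<^sup>2 / \<sigma>\<^sup>2) = 1 / E"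
    unfolding E_def by (simp add: exp_minus inverse_eq_divide)
  show ?thesis
    unfolding x0K_def[symmetric] r_def[symmetric] q_def[symmetric] weight scale
    using \<open>?barankin\<close> unfolding linear quadratic .
qed

lemma second_moment_ge_axis_derivatives:
  fixes x0 :: "real^'n" and \<gamma> :: "real^'n \<Rightarrow> real" and \<gamma>' :: "'n \<Rightarrow> real"
  assumes "\<sigma> > 0" and "card K \<le> S"
    and [measurable]: "g \<in> borel_measurable lborel"
    and "integrable (gauss_meas \<sigma> x0) (\<lambda>y. (g y)\<^sup>2)"
    and "\<And>x. x \<in> sparse_set S \<Longrightarrow>
      integrable (gauss_meas \<sigma> x) g \<and> (\<integral>y. g y \<partial>gauss_meas \<sigma> x) = \<gamma> x"
    and partial_derivative: "\<And>i. i \<in> K \<Longrightarrow>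
      ((\<lambda>t. \<gamma> (restr x0 K + t *\<^sub>R axis i 1)) has_real_derivative \<gamma>' i) (at 0)"
  shows "exp (- (norm (restr x0 (UNIV - K)))\<^sup>2 / \<sigma>\<^sup>2) * (\<sigma>\<^sup>2 * (\<Sum>i\<in>K. (\<gamma>' i)\<^sup>2) + (\<gamma> (restr x0 K))\<^sup>2)
    \<le> (\<integral>y. (g y)\<^sup>2 \<partial>gauss_meas \<sigma> x0)"
proof -
  let ?x = "restr x0 K" and ?w = "exp (- (norm (restr x0 (UNIV - K)))\<^sup>2 / \<sigma>\<^sup>2)"
  define \<beta> where "\<beta> i = \<sigma>\<^sup>2 * \<gamma>' i" for i
  let ?bound = "\<lambda>t. ?w * (2 * ((\<gamma> ?x)\<^sup>2 + (\<Sum>i\<in>K. \<beta> i * ((\<gamma> (?x + t *\<^sub>R axis i 1) - \<gamma> ?x) / t)))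
    - ((\<gamma> ?x)\<^sup>2 + (\<Sum>i\<in>K. (\<beta> i)\<^sup>2 * ((exp (t\<^sup>2 / \<sigma>\<^sup>2) - 1) / t\<^sup>2))))"
  let ?limit = "?w * (2 * ((\<gamma> ?x)\<^sup>2 + (\<Sum>i\<in>K. \<beta> i * \<gamma>' i))
    - ((\<gamma> ?x)\<^sup>2 + (\<Sum>i\<in>K. (\<beta> i)\<^sup>2 * inverse (\<sigma>\<^sup>2))))"
  have quotient: "((\<lambda>t. (\<gamma> (?x + t *\<^sub>R axis i 1) - \<gamma> ?x) / t) \<longlongrightarrow> \<gamma>' i) (at 0)" if "i \<in> K" for i
    using partial_derivative[OF that] by (simp add: has_field_derivative_iff)
  have "((\<lambda>t. (exp (t\<^sup>2 / \<sigma>\<^sup>2) - 1) / t\<^sup>2) \<longlongrightarrow> inverse (\<sigma>\<^sup>2)) (at 0)"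
    using \<open>\<sigma> > 0\<close> by real_asymp
  then have "(?bound \<longlongrightarrow> ?limit) (at 0)"
    by (intro tendsto_intros quotient)
  moreover have "\<forall>\<^sub>F t in at 0. ?bound t \<le> (\<integral>y. (g y)\<^sup>2 \<partial>gauss_meas \<sigma> x0)"
    using eventually_neq_at_within[of 0 0 UNIV]
    by eventually_elim (rule second_moment_ge_axis_quotients[OF assms(1) _ assms(2-5)])
  ultimately have "?limit \<le> (\<integral>y. (g y)\<^sup>2 \<partial>gauss_meas \<sigma> x0)"
    by (intro tendsto_le[OF _ tendsto_const]) auto
  moreover have "(\<Sum>i\<in>K. \<beta> i * \<gamma>' i) = \<sigma>\<^sup>2 * (\<Sum>i\<in>K. (\<gamma>' i)\<^sup>2)"
    by (simp add: \<beta>_def sum_distrib_left power2_eq_square mult.assoc)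
  moreover have "(\<Sum>i\<in>K. (\<beta> i)\<^sup>2 * inverse (\<sigma>\<^sup>2)) = \<sigma>\<^sup>2 * (\<Sum>i\<in>K. (\<gamma>' i)\<^sup>2)"
    using \<open>\<sigma> > 0\<close> by (simp add: \<beta>_def sum_distrib_left power2_eq_square field_simps)
  ultimately show ?thesis
    by (simp add: algebra_simps)
qed

lemma has_real_derivative_add_axis_component:
  assumes "((\<lambda>t. f (x + t *\<^sub>R axis i 1)) has_real_derivative d) (at 0)"
  shows "((\<lambda>t. f (x + t *\<^sub>R axis i 1) + (x + t *\<^sub>R axis i 1) $ k) has_real_derivative
    (if k = i then 1 else 0) + deriv (\<lambda>t. f (x + t *\<^sub>R axis i 1)) 0) (at 0)"
proof -
  have component: "(\<lambda>t. (x + t *\<^sub>R axis i 1) $ k) = (\<lambda>t. x $ k + t * (if k = i then 1 else 0))"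
    by (simp add: axis_def)
  have "((\<lambda>t. (x + t *\<^sub>R axis i 1) $ k) has_real_derivative (if k = i then 1 else 0)) (at 0)"
    unfolding component by (auto intro!: derivative_eq_intros)
  from DERIV_add[OF assms this] show ?thesis
    unfolding DERIV_imp_deriv[OF assms] by (simp only: add.commute)
qed

theorem corollary6:
  fixes S :: nat and \<sigma> :: real and k :: "'n::finite"
    and c :: "real^'n \<Rightarrow> real" and x0 :: "real^'n" and K :: "'n set"
  assumes "1 \<le> S" and "S \<le> CARD('n)"
    and "\<sigma> > 0"
    and "x0 \<in> sparse_set S"
    and "card K \<le> S"
    and "\<forall>i \<in> K. \<exists>d. ((\<lambda>t. c (restr x0 K + t *\<^sub>R axis i 1)) has_real_derivative d) (at 0)"
  shows "min_var S \<sigma> k c x0 \<ge>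
    ereal (exp (- (norm (restr x0 (UNIV - K)))\<^sup>2 / \<sigma>\<^sup>2)
             * (\<sigma>\<^sup>2 * (\<Sum>i\<in>K. ((if k = i then 1 else 0)
                     + deriv (\<lambda>t. c (restr x0 K + t *\<^sub>R axis i 1)) 0)\<^sup>2)
                + (c (restr x0 K) + restr x0 K $ k)\<^sup>2)
           - (c x0 + x0 $ k)\<^sup>2)"
  unfolding min_var_def
proof (rule INF_greatest)
  fix g assume "g \<in> {g. admissible S \<sigma> k c x0 g}"
  then have [measurable]: "g \<in> borel_measurable lborel"
    and square_integrable: "integrable (gauss_meas \<sigma> x0) (\<lambda>y. (g y)\<^sup>2)"
    and mean: "\<And>x. x \<in> sparse_set S \<Longrightarrow>
      integrable (gauss_meas \<sigma> x) g \<and> (\<integral>y. g y \<partial>gauss_meas \<sigma> x) = c x + x $ k"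
    unfolding admissible_def by auto
  have "((\<lambda>t. c (restr x0 K + t *\<^sub>R axis i 1) + (restr x0 K + t *\<^sub>R axis i 1) $ k)
      has_real_derivative (if k = i then 1 else 0) + deriv (\<lambda>t. c (restr x0 K + t *\<^sub>R axis i 1)) 0) (at 0)"
    if "i \<in> K" for i
    by (rule exE[OF bspec[OF assms(6) that]]) (rule has_real_derivative_add_axis_component)
  note second_moment_bound = second_moment_ge_axis_derivatives[where \<gamma> = "\<lambda>x. c x + x $ k",
      OF assms(3,5) _ square_integrable mean this]
  have "est_variance \<sigma> g x0 = (\<integral>y. (g y)\<^sup>2 \<partial>gauss_meas \<sigma> x0) - (c x0 + x0 $ k)\<^sup>2"
    using est_variance_eq_second_moment[OF assms(3) _ square_integrable] mean[OF assms(4)] by simp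
  then show "ereal (exp (- (norm (restr x0 (UNIV - K)))\<^sup>2 / \<sigma>\<^sup>2)
             * (\<sigma>\<^sup>2 * (\<Sum>i\<in>K. ((if k = i then 1 else 0)
                     + deriv (\<lambda>t. c (restr x0 K + t *\<^sub>R axis i 1)) 0)\<^sup>2)
                + (c (restr x0 K) + restr x0 K $ k)\<^sup>2)
           - (c x0 + x0 $ k)\<^sup>2) \<le> ereal (est_variance \<sigma> g x0)"
    using second_moment_bound by simp
qed

end
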